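(* Let $\lambda\ge 0$ be an integer. For one-sided matching with unrestricted (arbitrary nonnegative) valuations, the algorithm $\lambda$-TSF makes at most $1+\lambda+\lambda\log n$ value queries per agent and has distortion at most $2n^{1/(\lambda+1)}$.
   Context: One-sided matching: there is a set $N$ of $n$ agents and a set $A$ of $n$ items. Each agent $i$ has a valuation function $v_i:A\to\mathbb{R}_{\ge 0}$. A profile $\mathbf v$ induces an ordinal profile $\succ_{\mathbf v}$ of strict rankings consistent with the values (if $a\succ_i b$ then $v_i(a)\ge v_i(b)$). A matching $Y=(y_i)$ is a bijection $N\to A$, and $\mathrm{SW}(Y\mid\mathbf v)=\sum_i v_i(y_i)$. An algorithm receives $\succ_{\mathbf v}$ and may make value queries $(i,j)\mapsto v_i(j)$. Its distortion is $\sup_{\mathbf v}\max_Z\mathrm{SW}(Z\mid\mathbf v)/\mathrm{SW}(\text{output}\mid\mathbf v)$. Algorithm $\lambda$-TSF: let $\alpha_\ell=n^{-\ell/(\lambda+1)}$ for $\ell=0,\dots,\lambda$. For each agent $i$: - query $i$'s top-ranked item $j_i^*$ and let $v_i^*=v_i(j_i^* )$; - set $Q_{i,0}=\{j_i^*\}$ and $\tilde v_i(j_i^* )=v_i^*$; - for each $\ell=1,\dots,\lambda$, let $Q_{i,\ell}$ be the set of items $j\ne j_i^*$ with $v_i(j)\in[\alpha_\ell v_i^*,\alpha_{\ell-1}v_i^* )$ (for $\ell=1$ the upper endpoint $v_i^*$ is included). Since values are nonincreasing along $\succ_i$, each $Q_{i,\ell}$ is a contiguous segment of $i$'s ranking,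 and it is found by binary search over the ranking using value queries. Set $\tilde v_i(j)=\alpha_\ell v_i^*$ for $j\in Q_{i,\ell}$; - set $\tilde v_i(j)=0$ for items $j$ in no $Q_{i,\ell}$. The algorithm outputs a matching maximizing $\sum_i\tilde v_i(y_i)$. *)

theory Defs
  imports Complex_Main
begin

text \<open>Agents and items are both identified with {..<n}.  A valuation profile is
  v :: nat => nat => real (v i j = value of agent i for item j).  The ordinal profile
  is pref :: nat => nat => nat, where pref i k is the item agent i ranks at position k
  (position 0 = top).  A value oracle for agent i is accessed through positions:
  querying position k returns v i (pref i k).\<close>

definition is_matching :: "nat \<Rightarrow> (nat \<Rightarrow> nat) \<Rightarrow> bool" where
  "is_matching n y \<longleftrightarrow> bij_betw y {..<n} {..<n}"

definition SW :: "nat \<Rightarrow> (nat \<Rightarrow> nat \<Rightarrow> real) \<Rightarrow> (nat \<Rightarrow> nat) \<Rightarrow> real" where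
  "SW n v y = (\<Sum>i<n. v i (y i))"

text \<open>Returns the first position in [lo,hi] whose value is below threshold t (assuming
  values are nonincreasing), together with the list of queried positions.\<close>

function bsearch :: "(nat \<Rightarrow> real) \<Rightarrow> real \<Rightarrow> nat \<Rightarrow> nat \<Rightarrow> nat \<times> nat list" where
  "bsearch q t lo hi =
     (if hi \<le> lo then (lo, [])
      else (let mid = (lo + hi) div 2 in
            if t \<le> q mid
            then (let r = bsearch q t (Suc mid) hi in (fst r, mid # snd r))
            else (let r = bsearch q t lo mid in (fst r, mid # snd r))))"
  by pat_completeness auto
termination by (relation "measure (\<lambda>(q, t, lo, hi). hi - lo)") auto

definition tsf_alpha :: "nat \<Rightarrow> nat \<Rightarrow> nat \<Rightarrow> real" where
  "tsf_alpha n lam l = real n powr (- (real l / real (Suc lam)))"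

text \<open>The query of
  position 0 gives v*; for each l = 1..lambda a binary search over positions 1..<n
  finds the boundary b_l (first position with value < alpha_l v*), so that
  Q_l = positions in [b_(l-1), b_l) with b_0 = 1.\<close>

definition tsf_agent :: "nat \<Rightarrow> nat \<Rightarrow> (nat \<Rightarrow> real) \<Rightarrow> (nat \<Rightarrow> real) \<times> nat list" where
  "tsf_agent n lam q =
     (let vs = q 0;
          res = map (\<lambda>l. bsearch q (tsf_alpha n lam l * vs) 1 n) [1..<Suc lam];
          bnd = map fst res;
          est = (\<lambda>k. if k = 0 then vs
                     else (case find (\<lambda>l. k < bnd ! (l - 1)) [1..<Suc lam] of
                             None \<Rightarrow> 0
                           | Some l \<Rightarrow> tsf_alpha n lam l * vs))
      in (est, 0 # concat (map snd res)))"

definition tsf_queries :: "nat \<Rightarrow> nat \<Rightarrow> (nat \<Rightarrow> nat \<Rightarrow> real) \<Rightarrow> (nat \<Rightarrow> nat \<Rightarrow> nat) \<Rightarrow> nat \<Rightarrow> nat" where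
  "tsf_queries n lam v pref i = length (snd (tsf_agent n lam (\<lambda>k. v i (pref i k))))"

definition tsf_est :: "nat \<Rightarrow> nat \<Rightarrow> (nat \<Rightarrow> nat \<Rightarrow> real) \<Rightarrow> (nat \<Rightarrow> nat \<Rightarrow> nat) \<Rightarrow> nat \<Rightarrow> nat \<Rightarrow> real" where
  "tsf_est n lam v pref i j =
     fst (tsf_agent n lam (\<lambda>k. v i (pref i k))) (inv_into {..<n} (pref i) j)"

text \<open>Y is a possible output of lambda-TSF: a matching maximizing the estimated welfare
  (any tie-breaking).\<close>
definition tsf_output :: "nat \<Rightarrow> nat \<Rightarrow> (nat \<Rightarrow> nat \<Rightarrow> real) \<Rightarrow> (nat \<Rightarrow> nat \<Rightarrow> nat) \<Rightarrow> (nat \<Rightarrow> nat) \<Rightarrow> bool" where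
  "tsf_output n lam v pref Y \<longleftrightarrow> is_matching n Y \<and>
     (\<forall>Z. is_matching n Z \<longrightarrow> SW n (tsf_est n lam v pref) Z \<le> SW n (tsf_est n lam v pref) Y)"

end

theory Submission
  imports Defs "HOL-Combinatorics.Transposition"
begin

text \<open>Each estimate rounds the agent's value down to the grid \<open>\<alpha>_l v*\<close>, \<open>l = 1..\<lambda>\<close>, and to 0
  below \<open>\<alpha>_\<lambda> v*\<close>. Consecutive grid points differ by the factor \<open>c = n powr (1/(\<lambda>+1))\<close>,
  so the estimate \<open>e\<close> satisfies \<open>e \<le> v \<le> c e + \<alpha>_\<lambda> v*\<close>. Summing over a matching Z gives
  \<open>SW(Z) \<le> c e(Z) + \<alpha>_\<lambda> \<Sum>\<^sub>i v*_i\<close>. The estimated-optimal Y is at least as good as Z and as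
  every matching giving some agent its top item, and \<open>\<alpha>_\<lambda> n = c\<close>; hence
  \<open>SW(Z) \<le> 2c e(Y) \<le> 2c SW(Y)\<close>. Each of the \<open>\<lambda>\<close> thresholds is located by one binary search
  over the \<open>n - 1\<close> lower positions, costing at most \<open>1 + log n\<close> queries.\<close>

declare bsearch.simps [simp del]

lemma bsearch_empty [simp]: "hi \<le> lo \<Longrightarrow> bsearch q t lo hi = (lo, [])"
  by (simp add: bsearch.simps)

lemma bsearch_right:
  "\<lbrakk>lo < hi; mid = (lo + hi) div 2; t \<le> q mid\<rbrakk> \<Longrightarrow>
   bsearch q t lo hi = (fst (bsearch q t (Suc mid) hi), mid # snd (bsearch q t (Suc mid) hi))"
  by (subst bsearch.simps) (simp add: Let_def)

lemma bsearch_left: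
  "\<lbrakk>lo < hi; mid = (lo + hi) div 2; \<not> t \<le> q mid\<rbrakk> \<Longrightarrow>
   bsearch q t lo hi = (fst (bsearch q t lo mid), mid # snd (bsearch q t lo mid))"
  by (subst bsearch.simps) (simp add: Let_def)

lemma bsearch_correct:
  assumes "lo \<le> hi" and "\<And>a b. lo \<le> a \<Longrightarrow> a \<le> b \<Longrightarrow> b < hi \<Longrightarrow> q b \<le> q a"
  shows "fst (bsearch q t lo hi) \<in> {lo..hi} \<and>
    (\<forall>k\<in>{lo..<hi}. k < fst (bsearch q t lo hi) \<longleftrightarrow> t \<le> q k)"
  using assms
proof (induction q t lo hi rule: bsearch.induct)
  case (1 q t lo hi)
  define mid where "mid = (lo + hi) div 2"
  show ?case
  proof (cases "lo < hi")
    case False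
    with "1.prems" show ?thesis by auto
  next
    case lohi: True
    then have mid: "lo \<le> mid" "mid < hi" by (auto simp: mid_def)
    show ?thesis
    proof (cases "t \<le> q mid")
      case True
      have "t \<le> q k" if "lo \<le> k" "k \<le> mid" for k
        using True "1.prems"(2)[OF that] mid by (meson order_trans)
      with "1.IH"(1)[OF _ mid_def True] "1.prems" mid lohi
      show ?thesis by (auto simp: bsearch_right[of lo hi mid t q, OF lohi mid_def True] not_less_eq_eq)
    next
      case False
      have "\<not> t \<le> q k" if "mid \<le> k" "k < hi" for k
        using False "1.prems"(2)[OF _ that] mid by (meson order_trans)
      with "1.IH"(2)[OF _ mid_def False] "1.prems" mid lohi
      show ?thesis by (auto simp: bsearch_left[of lo hi mid t q, OF lohi mid_def False])
    qed
  qed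
qed

lemma bsearch_queries_length:
  "lo < hi \<Longrightarrow> 2 ^ length (snd (bsearch q t lo hi)) \<le> 2 * (hi - lo)"
proof (induction q t lo hi rule: bsearch.induct)
  case (1 q t lo hi)
  define mid where "mid = (lo + hi) div 2"
  show ?case
  proof (cases "t \<le> q mid")
    case True
    have "2 ^ length (snd (bsearch q t (Suc mid) hi)) \<le> max 1 (2 * (hi - Suc mid))"
      using "1.IH"(1)[OF _ mid_def True] "1.prems" by (cases "Suc mid < hi") auto
    then show ?thesis
      using "1.prems" by (simp add: bsearch_right[of lo hi mid t q, OF "1.prems" mid_def True] mid_def)
  next
    case False
    have "2 ^ length (snd (bsearch q t lo mid)) \<le> max 1 (2 * (mid - lo))"
      using "1.IH"(2)[OF _ mid_def False] "1.prems" by (cases "lo < mid") auto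
    then show ?thesis
      using "1.prems" by (simp add: bsearch_left[of lo hi mid t q, OF "1.prems" mid_def False] mid_def)
  qed
qed

lemma bsearch_queries_le_log:
  assumes "lo < hi"
  shows "real (length (snd (bsearch q t lo hi))) \<le> 1 + log 2 (real (hi - lo))"
proof -
  let ?L = "length (snd (bsearch q t lo hi))"
  have "(2::real) ^ ?L \<le> 2 * real (hi - lo)"
    using bsearch_queries_length[OF assms, of q t]
    by (metis of_nat_le_iff of_nat_mult of_nat_numeral of_nat_power)
  then have "log 2 (2 ^ ?L) \<le> log 2 (2 * real (hi - lo))"
    using assms by (subst log_le_cancel_iff) auto
  moreover have "log 2 (2 * real (hi - lo)) = 1 + log 2 (real (hi - lo))"
    using assms by (subst log_mult) auto
  ultimately show ?thesis by (simp add: log_nat_power)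
qed

lemma tsf_alpha_pos: "0 < n \<Longrightarrow> 0 < tsf_alpha n lam l"
  by (simp add: tsf_alpha_def)

lemma tsf_alpha_0 [simp]: "0 < n \<Longrightarrow> tsf_alpha n lam 0 = 1"
  by (simp add: tsf_alpha_def)

lemma tsf_alpha_Suc:
  shows "real n powr (1 / real (Suc lam)) * tsf_alpha n lam (Suc l) = tsf_alpha n lam l"
proof -
  have "1 / real (Suc lam) + - (real (Suc l) / real (Suc lam)) = - (real l / real (Suc lam))"
    by (simp add: field_simps)
  then show ?thesis by (simp add: tsf_alpha_def powr_add[symmetric])
qed

lemma tsf_alpha_last:
  assumes "0 < n"
  shows "tsf_alpha n lam lam * real n = real n powr (1 / real (Suc lam))"
proof -
  have "tsf_alpha n lam lam * real n = real n powr (- (real lam / real (Suc lam))) * real n powr 1"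
    using assms by (simp add: tsf_alpha_def)
  also have "\<dots> = real n powr (- (real lam / real (Suc lam)) + 1)"
    by (rule powr_add[symmetric])
  also have "- (real lam / real (Suc lam)) + 1 = 1 / real (Suc lam)"
    by (simp add: field_simps)
  finally show ?thesis .
qed

definition level_estimate :: "nat \<Rightarrow> nat \<Rightarrow> real \<Rightarrow> real \<Rightarrow> real" where
  "level_estimate n lam s x =
     (case find (\<lambda>l. tsf_alpha n lam l * s \<le> x) [1..<Suc lam] of
        None \<Rightarrow> 0
      | Some l \<Rightarrow> tsf_alpha n lam l * s)"

lemma level_estimate_bounds:
  assumes "0 < n" "0 \<le> s" "0 \<le> x"
  shows "0 \<le> level_estimate n lam s x \<and> level_estimate n lam s x \<le> x"
  using assms tsf_alpha_pos[OF assms(1)]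
  by (auto simp: level_estimate_def find_Some_iff less_imp_le split: option.split)

lemma le_level_estimate:
  assumes n: "0 < n" and s: "0 \<le> s" and x: "x \<le> s"
  shows "x \<le> real n powr (1 / real (Suc lam)) * level_estimate n lam s x + tsf_alpha n lam lam * s"
proof (cases "find (\<lambda>l. tsf_alpha n lam l * s \<le> x) [1..<Suc lam]")
  case None
  have "x \<le> tsf_alpha n lam lam * s"
  proof (cases lam)
    case 0
    with n x show ?thesis by simp
  next
    case (Suc m)
    with None show ?thesis by (auto simp: find_None_iff simp del: upt_Suc)
  qed
  with None show ?thesis by (simp add: level_estimate_def)
next
  case (Some l)
  then obtain i where i: "i < lam" "l = Suc i" "tsf_alpha n lam l * s \<le> x"
    and below: "\<forall>j<i. \<not> tsf_alpha n lam (Suc j) * s \<le> x"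
    by (auto simp: find_Some_iff simp del: upt_Suc)
  have "x \<le> tsf_alpha n lam i * s"
  proof (cases i)
    case 0
    with n x show ?thesis by simp
  next
    case (Suc j)
    with below show ?thesis by auto
  qed
  also have "\<dots> = real n powr (1 / real (Suc lam)) * level_estimate n lam s x"
    using Some i tsf_alpha_Suc[of n lam i] by (simp add: level_estimate_def)
  finally show ?thesis
    using tsf_alpha_pos[OF n, of lam lam] s by (simp add: add_increasing2)
qed

lemma tsf_agent_estimate_0 [simp]: "fst (tsf_agent n lam q) 0 = q 0"
  by (simp add: tsf_agent_def Let_def)

lemma tsf_agent_estimate:
  assumes "0 < k" "k < n" and mono: "\<And>a b. a \<le> b \<Longrightarrow> b < n \<Longrightarrow> q b \<le> q a"
  shows "fst (tsf_agent n lam q) k = level_estimate n lam (q 0) (q k)"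
proof -
  let ?bnd = "map fst (map (\<lambda>l. bsearch q (tsf_alpha n lam l * q 0) 1 n) [1..<Suc lam])"
  have "find (\<lambda>l. k < ?bnd ! (l - 1)) [1..<Suc lam]
      = find (\<lambda>l. tsf_alpha n lam l * q 0 \<le> q k) [1..<Suc lam]"
  proof (rule find_cong[OF refl])
    fix l assume "l \<in> set [1..<Suc lam]"
    then show "k < ?bnd ! (l - 1) \<longleftrightarrow> tsf_alpha n lam l * q 0 \<le> q k"
      using bsearch_correct[of 1 n q] assms by (auto simp del: upt_Suc)
  qed
  with assms show ?thesis
    by (simp add: tsf_agent_def level_estimate_def Let_def del: upt_Suc)
qed

lemma tsf_agent_queries:
  "length (snd (tsf_agent n lam q)) =
     Suc (\<Sum>l = 1..lam. length (snd (bsearch q (tsf_alpha n lam l * q 0) 1 n)))"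
proof -
  have "sum_list (map (\<lambda>l. length (snd (bsearch q (tsf_alpha n lam l * q 0) 1 n))) [1..<Suc lam])
      = (\<Sum>l = 1..lam. length (snd (bsearch q (tsf_alpha n lam l * q 0) 1 n)))"
    by (simp only: sum_set_upt_conv_sum_list_nat[symmetric] set_upt atLeastLessThanSuc_atLeastAtMost)
  then show ?thesis
    by (simp add: tsf_agent_def Let_def length_concat comp_def del: upt_Suc)
qed

lemma tsf_agent_queries_le:
  assumes "0 < n"
  shows "real (length (snd (tsf_agent n lam q))) \<le> 1 + real lam + real lam * log 2 (real n)"
proof -
  have "real (length (snd (bsearch q t 1 n))) \<le> 1 + log 2 (real n)" for t
  proof (cases "n = 1")
    case False
    with assms have "real (length (snd (bsearch q t 1 n))) \<le> 1 + log 2 (real (n - 1))"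
      by (intro bsearch_queries_le_log) simp
    also have "\<dots> \<le> 1 + log 2 (real n)"
      using False assms by simp
    finally show ?thesis .
  qed simp
  then have "real (\<Sum>l = 1..lam. length (snd (bsearch q (tsf_alpha n lam l * q 0) 1 n)))
      \<le> (\<Sum>l = 1..lam. 1 + log 2 (real n))"
    unfolding of_nat_sum by (intro sum_mono)
  then show ?thesis
    by (simp add: tsf_agent_queries algebra_simps)
qed

lemma tsf_est_bounds:
  assumes n: "0 < n" and j: "j < n"
    and nonneg: "\<And>j. j < n \<Longrightarrow> 0 \<le> v i j"
    and bij: "bij_betw (pref i) {..<n} {..<n}"
    and mono: "\<And>k k'. k < k' \<Longrightarrow> k' < n \<Longrightarrow> v i (pref i k') \<le> v i (pref i k)"
  shows "0 \<le> tsf_est n lam v pref i j \<and> tsf_est n lam v pref i j \<le> v i j \<and>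
    v i j \<le> real n powr (1 / real (Suc lam)) * tsf_est n lam v pref i j
            + tsf_alpha n lam lam * tsf_est n lam v pref i (pref i 0)"
proof -
  define q where "q = (\<lambda>k. v i (pref i k))"
  define k where "k = inv_into {..<n} (pref i) j"
  have k: "k < n" "pref i k = j"
    using bij j unfolding k_def bij_betw_def
    by (auto intro: inv_into_into[of j _ "{..<n}", simplified] simp: f_inv_into_f)
  have "inv_into {..<n} (pref i) (pref i 0) = 0"
    using bij n by (simp add: bij_betw_def inv_into_f_f)
  then have top: "tsf_est n lam v pref i (pref i 0) = q 0"
    by (simp add: tsf_est_def q_def)
  have est: "tsf_est n lam v pref i j = fst (tsf_agent n lam q) k"
    by (simp add: tsf_est_def q_def k_def)
  have q_nonneg: "0 \<le> q k'" if "k' < n" for k'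
    using nonneg bij_betw_apply[OF bij] that by (simp add: q_def)
  have q_mono: "q b \<le> q a" if "a \<le> b" "b < n" for a b
    using mono[of a b] that by (cases "a = b") (auto simp: q_def)
  show ?thesis
  proof (cases "k = 0")
    case True
    have "1 \<le> real n powr (1 / real (Suc lam))"
      using n by (simp add: ge_one_powr_ge_zero)
    then have "q 0 \<le> real n powr (1 / real (Suc lam)) * q 0 + tsf_alpha n lam lam * q 0"
      using q_nonneg[OF n] tsf_alpha_pos[OF n, of lam lam]
      by (simp add: add_increasing2 mult_le_cancel_right1)
    with True k show ?thesis
      using q_nonneg[OF n] by (simp add: est top q_def)
  next
    case False
    then have "fst (tsf_agent n lam q) k = level_estimate n lam (q 0) (q k)"
      using k q_mono by (intro tsf_agent_estimate) auto
    with level_estimate_bounds[OF n q_nonneg[OF n] q_nonneg[OF k(1)]]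
      le_level_estimate[OF n q_nonneg[OF n] q_mono[OF _ k(1)]] k
    show ?thesis by (simp add: est top q_def)
  qed
qed

lemma is_matching_transpose: "i < n \<Longrightarrow> j < n \<Longrightarrow> is_matching n (transpose i j)"
  by (simp add: is_matching_def)

lemma is_matching_less: "is_matching n Y \<Longrightarrow> i < n \<Longrightarrow> Y i < n"
  by (auto simp: is_matching_def bij_betw_def)

lemma le_SW_of_maximal:
  assumes Y: "\<And>W. is_matching n W \<Longrightarrow> SW n E W \<le> SW n E Y"
    and nonneg: "\<And>i j. i < n \<Longrightarrow> j < n \<Longrightarrow> 0 \<le> E i j"
    and "i < n" "j < n"
  shows "E i j \<le> SW n E Y"
proof -
  have W: "is_matching n (transpose i j)"
    using assms by (rule_tac is_matching_transpose)
  have "E i j = E i (transpose i j i)" by simp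
  also have "\<dots> \<le> SW n E (transpose i j)"
    unfolding SW_def using assms is_matching_less[OF W]
    by (intro member_le_sum) auto
  also have "\<dots> \<le> SW n E Y" using Y[OF W] .
  finally show ?thesis .
qed

lemma SW_distortion:
  fixes E v :: "nat \<Rightarrow> nat \<Rightarrow> real" and top :: "nat \<Rightarrow> nat"
  assumes Y: "is_matching n Y" "\<And>W. is_matching n W \<Longrightarrow> SW n E W \<le> SW n E Y"
    and Z: "is_matching n Z"
    and bounds: "\<And>i j. i < n \<Longrightarrow> j < n \<Longrightarrow>
       0 \<le> E i j \<and> E i j \<le> v i j \<and> v i j \<le> c * E i j + a * E i (top i)"
    and top: "\<And>i. i < n \<Longrightarrow> top i < n"
    and a: "0 \<le> a" and c: "a * real n \<le> c"
  shows "SW n v Z \<le> 2 * c * SW n v Y"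
proof -
  have E_le_SW: "E i j \<le> SW n E Y" if "i < n" "j < n" for i j
    using le_SW_of_maximal[OF Y(2) _ that] bounds by blast
  have SW_nonneg: "0 \<le> SW n E Y"
    unfolding SW_def using bounds is_matching_less[OF Y(1)] by (intro sum_nonneg) auto
  have "SW n v Z \<le> (\<Sum>i<n. c * E i (Z i) + a * E i (top i))"
    unfolding SW_def using bounds is_matching_less[OF Z] by (intro sum_mono) auto
  also have "\<dots> = c * SW n E Z + a * (\<Sum>i<n. E i (top i))"
    by (simp add: SW_def sum.distrib sum_distrib_left)
  also have "\<dots> \<le> c * SW n E Y + a * (real n * SW n E Y)"
  proof (intro add_mono mult_left_mono)
    show "(\<Sum>i<n. E i (top i)) \<le> real n * SW n E Y"
      using sum_mono[of "{..<n}" "\<lambda>i. E i (top i)" "\<lambda>_. SW n E Y"] E_le_SW top by simp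
    show "0 \<le> c" using a c by (meson order_trans mult_nonneg_nonneg of_nat_0_le_iff)
  qed (use Y(2)[OF Z] a in auto)
  also have "\<dots> \<le> 2 * c * SW n E Y"
    using mult_right_mono[OF c SW_nonneg] by (simp add: algebra_simps)
  also have "\<dots> \<le> 2 * c * SW n v Y"
  proof (intro mult_left_mono)
    show "SW n E Y \<le> SW n v Y"
      unfolding SW_def using bounds is_matching_less[OF Y(1)] by (intro sum_mono) auto
  qed (use a c in \<open>meson order_trans mult_nonneg_nonneg of_nat_0_le_iff zero_le_numeral\<close>)
  finally show ?thesis .
qed

theorem theorem2:
  fixes n lam :: nat and v :: "nat \<Rightarrow> nat \<Rightarrow> real" and pref :: "nat \<Rightarrow> nat \<Rightarrow> nat"
  assumes "0 < n"
    and "\<And>i j. i < n \<Longrightarrow> j < n \<Longrightarrow> 0 \<le> v i j"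
    and "\<And>i. i < n \<Longrightarrow> bij_betw (pref i) {..<n} {..<n}"
    and "\<And>i k k'. i < n \<Longrightarrow> k < k' \<Longrightarrow> k' < n \<Longrightarrow> v i (pref i k') \<le> v i (pref i k)"
  shows "(\<forall>i<n. real (tsf_queries n lam v pref i) \<le> 1 + real lam + real lam * log 2 (real n))
       \<and> (\<forall>Y. tsf_output n lam v pref Y \<longrightarrow>
            (\<forall>Z. is_matching n Z \<longrightarrow>
                 SW n v Z \<le> 2 * real n powr (1 / real (Suc lam)) * SW n v Y))"
proof (intro conjI allI impI)
  fix i assume "i < n"
  show "real (tsf_queries n lam v pref i) \<le> 1 + real lam + real lam * log 2 (real n)"
    unfolding tsf_queries_def using assms(1) by (rule tsf_agent_queries_le)
next
  fix Y Z assume Y: "tsf_output n lam v pref Y" and Z: "is_matching n Z"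
  show "SW n v Z \<le> 2 * real n powr (1 / real (Suc lam)) * SW n v Y"
  proof (rule SW_distortion[OF _ _ Z])
    show "is_matching n Y" "\<And>W. is_matching n W \<Longrightarrow>
        SW n (tsf_est n lam v pref) W \<le> SW n (tsf_est n lam v pref) Y"
      using Y by (auto simp: tsf_output_def)
    show "pref i 0 < n" if "i < n" for i
      using assms(1) assms(3)[OF that] by (auto simp: bij_betw_def)
    show "tsf_alpha n lam lam * real n \<le> real n powr (1 / real (Suc lam))"
      using tsf_alpha_last[OF assms(1)] by simp
  qed (use tsf_est_bounds assms tsf_alpha_pos[OF assms(1)] in \<open>auto simp: less_imp_le\<close>)
qed

end
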